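(* Consider $n$ single photons, one in each of $n$ modes, whose joint state is $\rho^{\otimes n}$ where each photon's state is $\rho=(1-\epsilon)\rho_{\mathrm{id}}+\epsilon\rho_{\mathrm{dist}}$ in the orthogonal-bad-bit model. Then the probability of obtaining a valid pattern after the $n$-mode Fourier interferometer followed by photon-number-resolving detection is $$\Big(1-\frac1n\Big)(1-\epsilon)^n+\frac1n.$$
   Context: Orthogonal-bad-bit (OBB) model: with probability $1-\epsilon$ a photon is in a fixed common internal state ($\rho_{\mathrm{id}}$, identical for all photons), and with probability $\epsilon$ it is in an internal state ($\rho_{\mathrm{dist}}$) orthogonal to the internal states of all other photons. Modes are labelled $0,\dots,n-1$; the Fourier interferometer acts on external modes only via $\hat a_r^\dagger[\xi]\mapsto\frac1{\sqrt n}\sum_{j=0}^{n-1}\omega^{-rj}\hat a_j^\dagger[\xi]$, $\omega=e^{2\pi i/n}$, where $\hat a_i^\dagger[\xi]$ creates a photon in mode $i$ with internal state $\xi$. Detectors resolve photon number per external mode but not internal states. A pattern $(s_0,\dots,s_{n-1})$ is valid if $\sum_i i\,s_i\equiv0\pmod n$. *)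

theory Defs
  imports Complex_Main "HOL-Library.FuncSet"
begin

text \<open>Modes and photons are labelled 0..n-1; photon j starts in input mode j.\<close>

definition omega :: "nat \<Rightarrow> complex" where
  "omega n = cis (2 * pi / real n)"

text \<open>Fourier interferometer: a_r^dagger maps to (1/sqrt n) sum_j omega^(-r j) a_j^dagger,
  so the single-photon amplitude from input mode r to output mode j is:\<close>
definition fourier :: "nat \<Rightarrow> nat \<Rightarrow> nat \<Rightarrow> complex" where
  "fourier n r j = (inverse (omega n)) ^ (r * j) / complex_of_real (sqrt (real n))"

definition patterns :: "nat \<Rightarrow> nat \<Rightarrow> (nat \<Rightarrow> nat) set" where
  "patterns n m = {s. (\<forall>i. s i \<noteq> 0 \<longrightarrow> i < n) \<and> (\<Sum>i<n. s i) = m}"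

definition valid_pattern :: "nat \<Rightarrow> (nat \<Rightarrow> nat) \<Rightarrow> bool" where
  "valid_pattern n s \<longleftrightarrow> (\<Sum>i<n. i * s i) mod n = 0"

definition cnt :: "nat set \<Rightarrow> (nat \<Rightarrow> nat) \<Rightarrow> nat \<Rightarrow> nat" where
  "cnt A f k = card {j \<in> A. f j = k}"

text \<open>Bosonic amplitude (up to the normalisation 1/sqrt(prod t_k!)) for the fully
  indistinguishable photons in input modes I to produce output pattern t:
  Perm(U[I,t]) / prod t_k! = sum over assignments f of I to output modes with
  occupation t of prod_j U_(j, f j).\<close>
definition amp :: "nat \<Rightarrow> nat set \<Rightarrow> (nat \<Rightarrow> nat) \<Rightarrow> complex" where
  "amp n I t = (\<Sum>f \<in> {f \<in> I \<rightarrow>\<^sub>E {..<n}. \<forall>k<n. cnt I f k = t k}.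
                   \<Prod>j\<in>I. fourier n j (f j))"

text \<open>Probability |Perm(U[I,t])|^2 / prod t_k! of pattern t for indistinguishable photons in I.\<close>
definition prob_ident :: "nat \<Rightarrow> nat set \<Rightarrow> (nat \<Rightarrow> nat) \<Rightarrow> real" where
  "prob_ident n I t = (\<Prod>k<n. fact (t k)) * (cmod (amp n I t))\<^sup>2"

text \<open>Probability of output pattern s when the photons in I are in the common internal
  state and every other photon is in an internal state orthogonal to all others:
  the latter propagate classically and independently, and the detectors do not
  resolve internal states, so the occupation numbers add up.\<close>
definition prob_pattern :: "nat \<Rightarrow> nat set \<Rightarrow> (nat \<Rightarrow> nat) \<Rightarrow> real" where
  "prob_pattern n I s =
     (let D = {..<n} - I in
      \<Sum>g \<in> D \<rightarrow>\<^sub>E {..<n}.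
        (\<Prod>j\<in>D. (cmod (fourier n j (g j)))\<^sup>2) *
        (if (\<forall>k<n. cnt D g k \<le> s k) then prob_ident n I (\<lambda>k. s k - cnt D g k) else 0))"

text \<open>OBB model: each photon independently is identical with probability 1 - eps and
  distinguishable with probability eps. Probability of a valid pattern:\<close>
definition prob_valid_OBB :: "nat \<Rightarrow> real \<Rightarrow> real" where
  "prob_valid_OBB n eps =
     (\<Sum>I \<in> Pow {..<n}. (1 - eps) ^ card I * eps ^ (n - card I) *
        (\<Sum>s \<in> {s \<in> patterns n n. valid_pattern n s}. prob_pattern n I s))"

end

(*
  Conditioning on the set I of photons in the common internal state turns the
  probability into a binomial mixture over I, so it suffices to show that the
  valid patterns have total probability 1 when every photon is in I and 1/n
  otherwise; the formula is then (1 - eps)^n + (1 - (1 - eps)^n) / n, for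
  every eps.

  The photons outside I propagate classically: each lands in a uniformly
  random output mode, and the detectors add their counts to the pattern t of
  the photons in I.  The result is valid iff the weighted sum of t plus the
  output modes of the classical photons vanishes mod n; if there is a classical
  photon, its output mode alone makes this happen with probability exactly 1/n,
  whatever t is.  This needs only that the output distribution of the photons
  in I is normalised, which follows from the orthogonality of the Fourier
  matrix once |Perm|^2 / prod t_k! is expanded as a sum over assignments of
  photons to output modes and over permutations.

  If every photon is in I, relabelling the input modes cyclically multiplies
  the amplitude of every assignment with occupation numbers t by the same phase
  omega^(-sum_i i t_i), so invalid patterns have amplitude 0 (the suppression
  law) and the valid ones carry all the probability.
*)

theory Submission
  imports Defs "HOL-Combinatorics.Permutations"
begin

section \<open>Roots of unity and the Fourier matrix\<close>

lemma omega_power: "omega n ^ k = cis (2 * pi * real k / real n)"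
  by (simp add: omega_def DeMoivre mult.commute)

lemma omega_power_eq_1_iff:
  assumes "0 < n"
  shows "omega n ^ k = 1 \<longleftrightarrow> n dvd k"
proof
  assume "omega n ^ k = 1"
  then have "cos (2 * pi * real k / real n) = 1"
    by (simp add: omega_power complex_eq_iff)
  then obtain m :: int where "2 * pi * real k / real n = real_of_int m * 2 * pi"
    using cos_one_2pi_int by blast
  then have "real k = real_of_int m * real n"
    using assms by (simp add: field_simps)
  then have "int k = m * int n"
    by (metis of_int_eq_iff of_int_mult of_int_of_nat_eq)
  then show "n dvd k"
    by (metis dvd_triv_right int_dvd_int_iff)
next
  assume "n dvd k"
  then obtain q where "k = n * q" ..
  moreover have "omega n ^ n = 1"
    using assms by (simp add: omega_power)
  ultimately show "omega n ^ k = 1"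
    by (simp add: power_mult)
qed

lemma norm_fourier_squared: "(cmod (fourier n j k))\<^sup>2 = 1 / real n"
  by (simp add: fourier_def omega_def norm_divide norm_power power_divide)

lemma fourier_times_cnj:
  assumes "i < n"
  shows "fourier n i k * cnj (fourier n i' k) = omega n ^ ((n - i + i') * k) / of_nat n"
proof -
  have "omega n ^ ((n - i + i') * k) * omega n ^ (i * k) = omega n ^ (n * k) * omega n ^ (i' * k)"
    using assms by (simp flip: power_add add_mult_distrib)
  also have "omega n ^ (n * k) = 1"
    using assms by (simp add: omega_power_eq_1_iff)
  finally have "inverse (omega n) ^ (i * k) * omega n ^ (i' * k) = omega n ^ ((n - i + i') * k)"
    by (simp add: field_simps omega_def)
  moreover have "cnj (omega n) = inverse (omega n)"
    by (simp add: omega_def cis_cnj)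
  moreover have "complex_of_real (sqrt (real n)) * complex_of_real (sqrt (real n)) = of_nat n"
    by (simp flip: of_real_mult)
  ultimately show ?thesis
    by (simp add: fourier_def)
qed

lemma fourier_orthonormal:
  assumes "i < n" and "i' < n"
  shows "(\<Sum>k<n. fourier n i k * cnj (fourier n i' k)) = (if i = i' then 1 else 0)"
proof -
  define z where "z = omega n ^ (n - i + i')"
  have "(\<Sum>k<n. fourier n i k * cnj (fourier n i' k)) = (\<Sum>k<n. z ^ k) / of_nat n"
    using assms(1) by (simp add: fourier_times_cnj z_def power_mult sum_divide_distrib)
  moreover have "z = 1 \<longleftrightarrow> i = i'"
  proof -
    have "n dvd n - i + i' \<longleftrightarrow> i = i'"
    proof
      assume "n dvd n - i + i'"
      then obtain q where q: "n - i + i' = n * q" ..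
      have "0 < n * q" "n * q < n * 2"
        using assms by (simp_all flip: q)
      then have "q = 1"
        by simp
      then show "i = i'"
        using assms q by simp
    qed (use assms in simp)
    then show ?thesis
      using assms by (simp add: z_def omega_power_eq_1_iff)
  qed
  moreover have "z ^ n = 1"
    using assms by (simp add: z_def omega_power_eq_1_iff flip: power_mult)
  ultimately show ?thesis
    using assms by (simp add: sum_gp_strict)
qed

section \<open>Occupation numbers and permutations\<close>

lemma cnt_insert:
  assumes "finite A" and "a \<notin> A"
  shows "cnt (insert a A) f k = (if f a = k then Suc (cnt A f k) else cnt A f k)"
proof -
  have "{j \<in> insert a A. f j = k} = (if f a = k then insert a {j \<in> A. f j = k} else {j \<in> A. f j = k})"
    by auto
  then show ?thesis
    using assms by (simp add: cnt_def)
qed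

lemma image_permutes_fiber:
  assumes "\<sigma> permutes A"
  shows "\<sigma> ` {x\<in>A. f (\<sigma> x) = k} = {y\<in>A. f y = k}"
proof -
  have "inv \<sigma> y \<in> A" if "y \<in> A" for y
    using that assms by (simp add: permutes_in_image permutes_inv)
  then show ?thesis
    using assms by (force simp: permutes_in_image permutes_inverses(1) image_iff)
qed

lemma cnt_comp_permutes:
  assumes "\<sigma> permutes A"
  shows "cnt A (f \<circ> \<sigma>) = cnt A f"
proof (rule ext)
  fix k
  have "inj_on \<sigma> {x\<in>A. f (\<sigma> x) = k}"
    using permutes_inj[OF assms] by (rule inj_on_subset) simp
  from card_image[OF this] show "cnt A (f \<circ> \<sigma>) k = cnt A f k"
    by (simp add: image_permutes_fiber[OF assms] cnt_def)
qed

lemma cnt_eq_0: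
  assumes "f ` A \<subseteq> {..<n}" and "n \<le> k"
  shows "cnt A f k = 0"
proof -
  have "{j \<in> A. f j = k} = {}"
    using assms by auto
  then show ?thesis
    unfolding cnt_def by (simp only: card.empty)
qed

lemma sum_cnt:
  assumes "finite A" and "f ` A \<subseteq> {..<n}"
  shows "(\<Sum>k<n. cnt A f k) = card A"
  using sum.group[OF assms(1) finite_lessThan assms(2), of "\<lambda>_. 1::nat"] by (simp add: cnt_def)

lemma sum_mult_cnt:
  assumes "finite A" and "f ` A \<subseteq> {..<n}"
  shows "(\<Sum>k<n. k * cnt A f k) = (\<Sum>j\<in>A. f j)"
proof -
  have "(\<Sum>j\<in>A. f j) = (\<Sum>k<n. \<Sum>j | j \<in> A \<and> f j = k. f j)"
    using sum.group[OF assms(1) finite_lessThan assms(2), of f] by simp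
  also have "\<dots> = (\<Sum>k<n. k * cnt A f k)"
    by (rule sum.cong) (auto simp: cnt_def)
  finally show ?thesis
    by simp
qed

lemma cnt_in_patterns:
  assumes "finite A" and "f ` A \<subseteq> {..<n}"
  shows "cnt A f \<in> patterns n (card A)"
  unfolding patterns_def mem_Collect_eq
proof (intro conjI allI impI)
  show "i < n" if "cnt A f i \<noteq> 0" for i
    using cnt_eq_0[OF assms(2), of i] that by (meson not_less)
qed (rule sum_cnt[OF assms])

lemma finite_patterns: "finite (patterns n m)"
proof (rule finite_subset)
  show "patterns n m \<subseteq> {t. \<forall>i. (i \<in> {..<n} \<longrightarrow> t i \<in> {..m}) \<and> (i \<notin> {..<n} \<longrightarrow> t i = 0)}"
    by (auto simp: patterns_def intro: order.trans[OF member_le_sum[of _ "{..<n}"]])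
qed (rule finite_set_of_finite_funs; simp)

lemma permutes_insert_comp_eq:
  assumes "a \<notin> J"
  shows "{\<sigma>. \<sigma> permutes insert a J \<and> (\<forall>x\<in>insert a J. f (\<sigma> x) = g x)} =
    (\<lambda>(b, p). transpose a b \<circ> p) `
      (SIGMA b:{b \<in> insert a J. f b = g a}. {p. p permutes J \<and> (\<forall>x\<in>J. f (transpose a b (p x)) = g x)})"
    (is "?S = ?h ` _")
proof -
  have "?S = {\<sigma> \<in> ?h ` {(b, p). b \<in> insert a J \<and> p \<in> {p. p permutes J}}. \<forall>x\<in>insert a J. f (\<sigma> x) = g x}"
    unfolding permutes_insert[symmetric] by simp
  also have "\<dots> = ?h ` {(b, p). b \<in> insert a J \<and> p permutes J \<and> (\<forall>x\<in>insert a J. f (transpose a b (p x)) = g x)}"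
    by auto
  also have "\<dots> = ?h ` (SIGMA b:{b \<in> insert a J. f b = g a}. {p. p permutes J \<and> (\<forall>x\<in>J. f (transpose a b (p x)) = g x)})"
    using assms by (intro arg_cong[where f="image ?h"]) (auto simp: permutes_not_in)
  finally show ?thesis .
qed

lemma inj_on_transpose_comp:
  assumes "a \<notin> J"
  shows "inj_on (\<lambda>(b, p). transpose a b \<circ> p) (UNIV \<times> {p. p permutes J})"
proof (rule inj_onI, clarsimp)
  fix b p c q
  assume "p permutes J" "q permutes J" and eq: "transpose a b \<circ> p = transpose a c \<circ> q"
  then have "p a = a" "q a = a"
    using assms by (simp_all add: permutes_not_in)
  then have "b = c"
    using fun_cong[OF eq, of a] by simp
  then show "b = c \<and> p = q"
    using arg_cong[OF eq, of "(\<circ>) (transpose a b)"] by (simp add: o_assoc)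
qed

lemma prod_fact_cnt_insert:
  assumes "finite J" and "a \<notin> J" and "finite K" and "g a \<in> K"
  shows "(\<Prod>k\<in>K. fact (cnt (insert a J) g k)) = Suc (cnt J g (g a)) * (\<Prod>k\<in>K. fact (cnt J g k))"
proof -
  have "(\<Prod>k\<in>K. fact (cnt (insert a J) g k)) =
      fact (cnt (insert a J) g (g a)) * (\<Prod>k\<in>K - {g a}. fact (cnt (insert a J) g k))"
    using assms(3,4) by (rule prod.remove)
  also have "\<dots> = Suc (cnt J g (g a)) * (fact (cnt J g (g a)) * (\<Prod>k\<in>K - {g a}. fact (cnt J g k)))"
    using assms(1,2) by (simp add: cnt_insert algebra_simps)
  also have "\<dots> = Suc (cnt J g (g a)) * (\<Prod>k\<in>K. fact (cnt J g k))"
    by (subst prod.remove[OF assms(3,4)]) simp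
  finally show ?thesis .
qed

lemma card_permutes_comp_eq_on:
  assumes "finite I" and "finite K" and "g ` I \<subseteq> K" and "cnt I f = cnt I g"
  shows "card {\<sigma>. \<sigma> permutes I \<and> (\<forall>x\<in>I. f (\<sigma> x) = g x)} = (\<Prod>k\<in>K. fact (cnt I g k))"
  using assms(1,3,4)
proof (induction I arbitrary: f rule: finite_induct)
  case empty
  then show ?case
    by (simp add: cnt_def)
next
  case (insert a J)
  define B where "B = {b \<in> insert a J. f b = g a}"
  define T where "T b = {p. p permutes J \<and> (\<forall>x\<in>J. f (transpose a b (p x)) = g x)}" for b
  have card_T: "card (T b) = (\<Prod>k\<in>K. fact (cnt J g k))" if "b \<in> B" for b
  proof -
    have "transpose a b permutes insert a J"
      using that by (simp add: B_def permutes_swap_id)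
    then have cnt_eq: "cnt (insert a J) (f \<circ> transpose a b) k = cnt (insert a J) g k" for k
      using insert.prems(2) by (simp add: cnt_comp_permutes)
    have "cnt J (f \<circ> transpose a b) k = cnt J g k" for k
      using cnt_eq[of k] that insert.hyps by (simp add: B_def cnt_insert split: if_splits)
    then have "cnt J (f \<circ> transpose a b) = cnt J g" ..
    with insert.prems(1) show ?thesis
      using insert.IH[of "f \<circ> transpose a b"] by (simp add: T_def comp_def)
  qed
  have "card B = cnt (insert a J) f (g a)"
    by (simp add: B_def cnt_def)
  also have "\<dots> = cnt (insert a J) g (g a)"
    using insert.prems(2) by (rule fun_cong)
  also have "\<dots> = Suc (cnt J g (g a))"
    using insert.hyps by (simp add: cnt_insert)
  finally have card_B: "card B = Suc (cnt J g (g a))" .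
  have "inj_on (\<lambda>(b, p). transpose a b \<circ> p) (Sigma B T)"
    by (rule inj_on_subset[OF inj_on_transpose_comp[OF insert.hyps(2)]]) (auto simp: T_def)
  moreover have "{\<sigma>. \<sigma> permutes insert a J \<and> (\<forall>x\<in>insert a J. f (\<sigma> x) = g x)} =
      (\<lambda>(b, p). transpose a b \<circ> p) ` Sigma B T"
    unfolding permutes_insert_comp_eq[OF insert.hyps(2)] B_def T_def ..
  ultimately have "card {\<sigma>. \<sigma> permutes insert a J \<and> (\<forall>x\<in>insert a J. f (\<sigma> x) = g x)} = card (Sigma B T)"
    by (simp add: card_image)
  also have "\<dots> = (\<Sum>b\<in>B. card (T b))"
    by (rule card_SigmaI) (use insert.hyps(1) in \<open>auto simp: B_def T_def
        intro: finite_subset[OF _ finite_permutations[OF insert.hyps(1)]]\<close>)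
  also have "\<dots> = card B * (\<Prod>k\<in>K. fact (cnt J g k))"
    using card_T by simp
  finally show ?case
    using prod_fact_cnt_insert[OF insert.hyps assms(2)] insert.prems(1) card_B by simp
qed

section \<open>Normalisation of the output distribution\<close>

definition assignment_amp :: "nat \<Rightarrow> nat set \<Rightarrow> (nat \<Rightarrow> nat) \<Rightarrow> complex" where
  "assignment_amp n I f = (\<Prod>j\<in>I. fourier n j (f j))"

lemma amp_eq_sum_assignment_amp:
  assumes "t \<in> patterns n m"
  shows "amp n I t = (\<Sum>f | f \<in> I \<rightarrow>\<^sub>E {..<n} \<and> cnt I f = t. assignment_amp n I f)"
proof -
  have "(\<forall>k<n. cnt I f k = t k) \<longleftrightarrow> cnt I f = t" if "f \<in> I \<rightarrow>\<^sub>E {..<n}" for f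
  proof -
    have "f ` I \<subseteq> {..<n}"
      using that by auto
    then have "cnt I f k = t k" if "n \<le> k" for k
      using assms that cnt_eq_0[of f I n k] by (auto simp: patterns_def)
    then show ?thesis
      unfolding fun_eq_iff using not_less by blast
  qed
  then show ?thesis
    unfolding amp_def assignment_amp_def by (intro sum.cong) auto
qed

lemma comp_permutes_in_PiE:
  assumes "f \<in> I \<rightarrow>\<^sub>E B" and "\<sigma> permutes I"
  shows "f \<circ> \<sigma> \<in> I \<rightarrow>\<^sub>E B"
  using assms by (auto simp: PiE_iff permutes_in_image permutes_not_in extensional_def)

lemma sum_permutes_comp:
  fixes h :: "(nat \<Rightarrow> nat) \<Rightarrow> 'a::semiring_1"
  assumes "finite I" and f: "f \<in> I \<rightarrow>\<^sub>E {..<n}"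
  shows "(\<Sum>\<sigma> | \<sigma> permutes I. h (f \<circ> \<sigma>)) =
    of_nat (\<Prod>k<n. fact (cnt I f k)) * (\<Sum>g | g \<in> I \<rightarrow>\<^sub>E {..<n} \<and> cnt I g = cnt I f. h g)"
proof -
  define S where "S = {g. g \<in> I \<rightarrow>\<^sub>E {..<n} \<and> cnt I g = cnt I f}"
  have "(\<lambda>\<sigma>. f \<circ> \<sigma>) ` {\<sigma>. \<sigma> permutes I} \<subseteq> S"
    unfolding S_def using f comp_permutes_in_PiE cnt_comp_permutes by blast
  moreover have "finite S"
    using assms(1) by (simp add: S_def finite_PiE)
  ultimately have "(\<Sum>\<sigma> | \<sigma> permutes I. h (f \<circ> \<sigma>)) =
      (\<Sum>g\<in>S. \<Sum>\<sigma> | \<sigma> \<in> {\<sigma>. \<sigma> permutes I} \<and> f \<circ> \<sigma> = g. h (f \<circ> \<sigma>))"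
    using assms(1) finite_permutations by (intro sum.group[symmetric]) 
  also have "\<dots> = (\<Sum>g\<in>S. of_nat (\<Prod>k<n. fact (cnt I f k)) * h g)"
  proof (rule sum.cong[OF refl])
    fix g assume g: "g \<in> S"
    then have g_PiE: "g \<in> I \<rightarrow>\<^sub>E {..<n}" and cnt_g: "cnt I g = cnt I f"
      by (simp_all add: S_def)
    have "f \<circ> \<sigma> = g \<longleftrightarrow> (\<forall>x\<in>I. f (\<sigma> x) = g x)" if "\<sigma> permutes I" for \<sigma>
      using PiE_ext[OF comp_permutes_in_PiE[OF f that] g_PiE] by auto
    then have "{\<sigma>. \<sigma> permutes I \<and> f \<circ> \<sigma> = g} = {\<sigma>. \<sigma> permutes I \<and> (\<forall>x\<in>I. f (\<sigma> x) = g x)}"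
      by blast
    also have "card \<dots> = (\<Prod>k<n. fact (cnt I f k))"
      using card_permutes_comp_eq_on[OF assms(1) finite_lessThan, where f = f and g = g] g_PiE cnt_g by auto
    finally show "(\<Sum>\<sigma> | \<sigma> \<in> {\<sigma>. \<sigma> permutes I} \<and> f \<circ> \<sigma> = g. h (f \<circ> \<sigma>)) =
        of_nat (\<Prod>k<n. fact (cnt I f k)) * h g"
      by simp
  qed
  finally show ?thesis
    by (simp add: S_def sum_distrib_left)
qed

lemma sum_assignment_amp_times_cnj_comp:
  assumes "I \<subseteq> {..<n}" and "\<sigma> permutes I"
  shows "(\<Sum>f\<in>I \<rightarrow>\<^sub>E {..<n}. assignment_amp n I f * cnj (assignment_amp n I (f \<circ> \<sigma>))) =
    (if \<sigma> = id then 1 else 0)"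
proof -
  have finite: "finite I"
    using assms(1) finite_subset by blast
  have "cnj (assignment_amp n I (f \<circ> \<sigma>)) = (\<Prod>i\<in>I. cnj (fourier n (inv \<sigma> i) (f i)))" for f
  proof -
    have "assignment_amp n I (f \<circ> \<sigma>) = (\<Prod>i\<in>I. fourier n (inv \<sigma> i) (f (\<sigma> (inv \<sigma> i))))"
      unfolding assignment_amp_def using prod.permute[OF permutes_inv[OF assms(2)]] by (simp add: comp_def)
    then show ?thesis
      using assms(2) by (simp add: cnj_prod permutes_inverses(1))
  qed
  then have "(\<Sum>f\<in>I \<rightarrow>\<^sub>E {..<n}. assignment_amp n I f * cnj (assignment_amp n I (f \<circ> \<sigma>))) =
      (\<Sum>f\<in>I \<rightarrow>\<^sub>E {..<n}. \<Prod>i\<in>I. fourier n i (f i) * cnj (fourier n (inv \<sigma> i) (f i)))"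
    by (simp add: assignment_amp_def prod.distrib)
  also have "\<dots> = (\<Prod>i\<in>I. \<Sum>k<n. fourier n i k * cnj (fourier n (inv \<sigma> i) k))"
    using finite by (simp add: prod_sum_PiE)
  also have "\<dots> = (\<Prod>i\<in>I. if \<sigma> i = i then 1 else 0)"
  proof (rule prod.cong[OF refl])
    fix i assume "i \<in> I"
    then have "inv \<sigma> i \<in> I"
      using assms(2) by (simp add: permutes_in_image permutes_inv)
    with \<open>i \<in> I\<close> have "i < n" "inv \<sigma> i < n"
      using assms(1) by auto
    moreover have "i = inv \<sigma> i \<longleftrightarrow> \<sigma> i = i"
      using permutes_inv_eq[OF assms(2)] by metis
    ultimately show "(\<Sum>k<n. fourier n i k * cnj (fourier n (inv \<sigma> i) k)) = (if \<sigma> i = i then 1 else 0)"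
      by (simp add: fourier_orthonormal)
  qed
  also have "\<dots> = (if \<sigma> = id then 1 else 0)"
  proof -
    have "(\<forall>i\<in>I. \<sigma> i = i) \<longleftrightarrow> \<sigma> = id"
      using assms(2) by (auto simp: fun_eq_iff permutes_not_in)
    then show ?thesis
      using finite by (auto simp: prod_zero_iff)
  qed
  finally show ?thesis .
qed

lemma prob_ident_eq_sum_assignments:
  assumes "t \<in> patterns n m"
  shows "complex_of_real (prob_ident n I t) =
    (\<Sum>f | f \<in> I \<rightarrow>\<^sub>E {..<n} \<and> cnt I f = t. of_nat (\<Prod>k<n. fact (cnt I f k)) *
      (\<Sum>g | g \<in> I \<rightarrow>\<^sub>E {..<n} \<and> cnt I g = cnt I f. assignment_amp n I f * cnj (assignment_amp n I g)))"
proof -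
  define S where "S = {f. f \<in> I \<rightarrow>\<^sub>E {..<n} \<and> cnt I f = t}"
  define A where "A = assignment_amp n I"
  have "complex_of_real (prob_ident n I t) = of_nat (\<Prod>k<n. fact (t k)) * (amp n I t * cnj (amp n I t))"
    by (simp add: prob_ident_def flip: complex_norm_square)
  also have "\<dots> = of_nat (\<Prod>k<n. fact (t k)) * (\<Sum>f\<in>S. \<Sum>g\<in>S. A f * cnj (A g))"
    using assms by (simp add: amp_eq_sum_assignment_amp S_def A_def cnj_sum sum_product)
  also have "\<dots> = (\<Sum>f\<in>S. of_nat (\<Prod>k<n. fact (cnt I f k)) *
      (\<Sum>g | g \<in> I \<rightarrow>\<^sub>E {..<n} \<and> cnt I g = cnt I f. A f * cnj (A g)))"
    by (simp add: sum_distrib_left S_def)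
  finally show ?thesis
    by (simp add: S_def A_def)
qed

theorem sum_prob_ident_eq_1:
  assumes "I \<subseteq> {..<n}"
  shows "(\<Sum>t\<in>patterns n (card I). prob_ident n I t) = 1"
proof -
  define F where "F = I \<rightarrow>\<^sub>E {..<n}"
  define A where "A = assignment_amp n I"
  define w where "w f = of_nat (\<Prod>k<n. fact (cnt I f k)) * (\<Sum>g | g \<in> F \<and> cnt I g = cnt I f. A f * cnj (A g))" for f
  have finite: "finite I"
    using assms finite_subset by blast
  have "complex_of_real (\<Sum>t\<in>patterns n (card I). prob_ident n I t) =
      (\<Sum>t\<in>patterns n (card I). \<Sum>f | f \<in> F \<and> cnt I f = t. w f)"
    by (simp add: prob_ident_eq_sum_assignments w_def F_def A_def)
  also have "\<dots> = (\<Sum>f\<in>F. w f)"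
    using finite by (intro sum.group) (auto simp: F_def finite_PiE finite_patterns intro!: cnt_in_patterns)
  also have "\<dots> = (\<Sum>f\<in>F. \<Sum>\<sigma> | \<sigma> permutes I. A f * cnj (A (f \<circ> \<sigma>)))"
  proof (rule sum.cong[OF refl])
    fix f assume "f \<in> F"
    then show "w f = (\<Sum>\<sigma> | \<sigma> permutes I. A f * cnj (A (f \<circ> \<sigma>)))"
      using sum_permutes_comp[OF finite, where f = f and h = "\<lambda>g. A f * cnj (A g)"]
      by (simp add: w_def F_def)
  qed
  also have "\<dots> = (\<Sum>\<sigma> | \<sigma> permutes I. if \<sigma> = id then 1 else 0)"
    using assms by (subst sum.swap) (simp add: F_def A_def sum_assignment_amp_times_cnj_comp)
  also have "\<dots> = 1"
    using finite by (simp add: finite_permutations permutes_id)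
  finally show ?thesis
    by (simp only: of_real_eq_1_iff)
qed

section \<open>The suppression law\<close>

definition cyclic_shift :: "nat \<Rightarrow> nat \<Rightarrow> nat" where
  "cyclic_shift n i = (if i < n then Suc i mod n else i)"

lemma cyclic_shift_less:
  assumes "i < n"
  shows "cyclic_shift n i = (if Suc i = n then 0 else Suc i)"
  using assms by (simp add: cyclic_shift_def mod_Suc)

lemma cyclic_shift_permutes: "cyclic_shift n permutes {..<n}"
proof (rule bij_imp_permutes)
  have "inj_on (cyclic_shift n) {..<n}"
    by (auto simp: inj_on_def cyclic_shift_less)
  moreover have "cyclic_shift n ` {..<n} \<subseteq> {..<n}"
    by (auto simp: cyclic_shift_def)
  ultimately show "bij_betw (cyclic_shift n) {..<n} {..<n}"
    by (simp add: bij_betw_def endo_inj_surj)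
qed (simp add: cyclic_shift_def)

lemma fourier_cyclic_shift:
  assumes "i < n"
  shows "fourier n (cyclic_shift n i) k = fourier n i k * inverse (omega n) ^ k"
proof -
  have "inverse (omega n) ^ (cyclic_shift n i * k) = inverse (omega n) ^ (Suc i * k)"
  proof (cases "Suc i = n")
    case True
    then have "omega n ^ (Suc i * k) = 1"
      by (simp add: omega_power_eq_1_iff)
    with True show ?thesis
      using assms by (simp add: cyclic_shift_less power_inverse)
  qed (use assms in \<open>simp add: cyclic_shift_less\<close>)
  then show ?thesis
    by (simp add: fourier_def power_add)
qed

lemma assignment_amp_comp_cyclic_shift:
  "assignment_amp n {..<n} f =
    assignment_amp n {..<n} (f \<circ> cyclic_shift n) * inverse (omega n) ^ (\<Sum>j<n. f j)"
proof -
  have r: "cyclic_shift n permutes {..<n}"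
    by (rule cyclic_shift_permutes)
  have "assignment_amp n {..<n} f = (\<Prod>j<n. fourier n (cyclic_shift n j) (f (cyclic_shift n j)))"
    unfolding assignment_amp_def using prod.permute[OF r] by (simp add: comp_def)
  also have "\<dots> = (\<Prod>j<n. fourier n j (f (cyclic_shift n j)) * inverse (omega n) ^ f (cyclic_shift n j))"
    by (intro prod.cong refl) (simp add: fourier_cyclic_shift)
  also have "\<dots> = assignment_amp n {..<n} (f \<circ> cyclic_shift n) * inverse (omega n) ^ (\<Sum>j<n. f (cyclic_shift n j))"
    by (simp add: assignment_amp_def prod.distrib power_sum)
  also have "(\<Sum>j<n. f (cyclic_shift n j)) = (\<Sum>j<n. f j)"
    using sum.permute[OF r, of f] by (simp add: comp_def)
  finally show ?thesis .
qed

lemma bij_betw_comp_permutes: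
  assumes "\<sigma> permutes I"
  shows "bij_betw (\<lambda>f. f \<circ> \<sigma>) {f. f \<in> I \<rightarrow>\<^sub>E B \<and> cnt I f = t} {f. f \<in> I \<rightarrow>\<^sub>E B \<and> cnt I f = t}"
proof (rule bij_betw_byWitness[where f' = "\<lambda>f. f \<circ> inv \<sigma>"])
  have "f \<circ> p \<in> I \<rightarrow>\<^sub>E B \<and> cnt I (f \<circ> p) = t" if "f \<in> I \<rightarrow>\<^sub>E B" "cnt I f = t" "p permutes I" for f p
    using that by (simp add: comp_permutes_in_PiE cnt_comp_permutes)
  then show "(\<lambda>f. f \<circ> \<sigma>) ` {f. f \<in> I \<rightarrow>\<^sub>E B \<and> cnt I f = t} \<subseteq> {f. f \<in> I \<rightarrow>\<^sub>E B \<and> cnt I f = t}"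
    and "(\<lambda>f. f \<circ> inv \<sigma>) ` {f. f \<in> I \<rightarrow>\<^sub>E B \<and> cnt I f = t} \<subseteq> {f. f \<in> I \<rightarrow>\<^sub>E B \<and> cnt I f = t}"
    using assms permutes_inv[OF assms] by blast+
qed (use assms in \<open>simp_all add: comp_assoc permutes_inv_o\<close>)

theorem amp_eq_0_if_not_valid:
  assumes "t \<in> patterns n m" and "\<not> valid_pattern n t"
  shows "amp n {..<n} t = 0"
proof -
  define S where "S = {f. f \<in> {..<n} \<rightarrow>\<^sub>E {..<n} \<and> cnt {..<n} f = t}"
  define A where "A = assignment_amp n {..<n}"
  define c where "c = inverse (omega n) ^ (\<Sum>i<n. i * t i)"
  have "A f = A (f \<circ> cyclic_shift n) * c" if "f \<in> S" for f
  proof -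
    have "f ` {..<n} \<subseteq> {..<n}" and "cnt {..<n} f = t"
      using that by (auto simp: S_def)
    then have "(\<Sum>j<n. f j) = (\<Sum>i<n. i * t i)"
      using sum_mult_cnt[of "{..<n}" f n] by simp
    then show ?thesis
      unfolding A_def c_def by (subst assignment_amp_comp_cyclic_shift) simp
  qed
  then have "(\<Sum>f\<in>S. A f) = (\<Sum>f\<in>S. A (f \<circ> cyclic_shift n)) * c"
    by (simp add: sum_distrib_right)
  also have "(\<Sum>f\<in>S. A (f \<circ> cyclic_shift n)) = (\<Sum>f\<in>S. A f)"
    using bij_betw_comp_permutes[OF cyclic_shift_permutes] unfolding S_def by (rule sum.reindex_bij_betw)
  finally have "(\<Sum>f\<in>S. A f) = (\<Sum>f\<in>S. A f) * c" .
  moreover have "c \<noteq> 1"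
  proof -
    have "0 < n"
      using assms(2) by (rule contrapos_np) (simp add: valid_pattern_def)
    have "omega n ^ (\<Sum>i<n. i * t i) \<noteq> 1"
      using omega_power_eq_1_iff[OF \<open>0 < n\<close>] assms(2) by (simp add: valid_pattern_def dvd_eq_mod_eq_0)
    then show ?thesis
      by (simp add: c_def power_inverse)
  qed
  moreover have "amp n {..<n} t = (\<Sum>f\<in>S. A f)"
    using amp_eq_sum_assignment_amp[OF assms(1)] by (simp add: S_def A_def)
  ultimately show ?thesis
    by simp
qed

section \<open>Distinguishable photons\<close>

lemma add_mod_eq_0_iff:
  fixes n :: nat
  assumes "r < n" and "y < n"
  shows "(r + y) mod n = 0 \<longleftrightarrow> y = (n - r) mod n"
proof (cases "r = 0")
  case False
  then have complement: "(n - r) mod n = n - r"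
    using assms by (intro mod_less) linarith
  show ?thesis
  proof (cases "r + y < n")
    case True
    then show ?thesis
      using False complement by simp
  next
    case False
    then have "(r + y) mod n = r + y - n"
      using assms by (simp add: le_mod_geq)
    then show ?thesis
      using assms False complement by auto
  qed
qed (use assms in simp)

lemma card_add_mod_eq_0:
  fixes n :: nat
  assumes "0 < n"
  shows "card {y \<in> {..<n}. (b + y) mod n = 0} = 1"
proof -
  have "y \<in> {..<n} \<and> (b + y) mod n = 0 \<longleftrightarrow> y \<in> {..<n} \<and> y = (n - b mod n) mod n" for y
  proof (cases "y < n")
    case True
    have "(b + y) mod n = (b mod n + y) mod n"
      by (rule mod_add_left_eq[symmetric])
    with add_mod_eq_0_iff[OF mod_less_divisor[OF assms] True] True show ?thesis
      by (simp only: lessThan_iff simp_thms)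
  qed simp
  then have "{y \<in> {..<n}. (b + y) mod n = 0} = {y \<in> {..<n}. y = (n - b mod n) mod n}"
    by (rule Collect_cong)
  also have "\<dots> = {(n - b mod n) mod n}"
    using assms by auto
  finally show ?thesis
    by simp
qed

lemma card_PiE_sum_mod_eq_0:
  fixes D :: "'a set" and n :: nat
  assumes "0 < n" and "finite D" and "d \<in> D"
  shows "card {g \<in> D \<rightarrow>\<^sub>E {..<n}. (a + (\<Sum>j\<in>D. g j)) mod n = 0} = n ^ (card D - 1)"
proof -
  define D' where "D' = D - {d}"
  have D: "D = insert d D'" "d \<notin> D'" "finite D'"
    using assms by (auto simp: D'_def)
  have sum_upd: "(\<Sum>j\<in>D'. if j = d then y else g j) = (\<Sum>j\<in>D'. g j)" for g :: "'a \<Rightarrow> nat" and y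
    using D(2) by (intro sum.cong) auto
  have "card {g \<in> D \<rightarrow>\<^sub>E {..<n}. (a + (\<Sum>j\<in>D. g j)) mod n = 0} =
      (\<Sum>g\<in>D \<rightarrow>\<^sub>E {..<n}. if (a + (\<Sum>j\<in>D. g j)) mod n = 0 then 1 else 0)"
    using assms(2) by (simp add: finite_PiE flip: sum.inter_filter)
  also have "\<dots> = (\<Sum>(y, g)\<in>{..<n} \<times> (D' \<rightarrow>\<^sub>E {..<n}). if (a + y + (\<Sum>j\<in>D'. g j)) mod n = 0 then 1 else 0)"
    unfolding D(1) PiE_insert_eq using D(2,3)
    by (subst sum.reindex[OF inj_combinator]) (simp_all add: case_prod_unfold sum_upd add.assoc)
  also have "\<dots> = (\<Sum>g\<in>D' \<rightarrow>\<^sub>E {..<n}. \<Sum>y<n. if ((a + (\<Sum>j\<in>D'. g j)) + y) mod n = 0 then 1 else 0)"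
    unfolding sum.cartesian_product[symmetric] by (subst sum.swap) (simp add: add_ac)
  also have "\<dots> = (\<Sum>g\<in>D' \<rightarrow>\<^sub>E {..<n}. card {y \<in> {..<n}. ((a + (\<Sum>j\<in>D'. g j)) + y) mod n = 0})"
    by (simp flip: sum.inter_filter)
  also have "\<dots> = n ^ card D'"
    using D card_add_mod_eq_0[OF assms(1)] by (simp add: card_PiE)
  finally show ?thesis
    using D by simp
qed

lemma sum_patterns_shift:
  fixes h :: "(nat \<Rightarrow> nat) \<Rightarrow> 'a::comm_monoid_add"
  assumes c: "c \<in> patterns n m'"
  shows "(\<Sum>s | s \<in> patterns n (m + m') \<and> (\<forall>k<n. c k \<le> s k). h s) = (\<Sum>t\<in>patterns n m. h (\<lambda>k. t k + c k))"
proof (rule sum.reindex_bij_witness[where j = "\<lambda>s k. s k - c k" and i = "\<lambda>t k. t k + c k"])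
  have c0: "c k = 0" if "n \<le> k" for k
    using c that by (auto simp: patterns_def)
  fix s assume s: "s \<in> {s. s \<in> patterns n (m + m') \<and> (\<forall>k<n. c k \<le> s k)}"
  then have "c k \<le> s k" for k
    using c0 by (cases "k < n") auto
  then show "(\<lambda>k. s k - c k + c k) = s"
    by simp
  have "(\<Sum>k<n. s k - c k) = (\<Sum>k<n. s k) - (\<Sum>k<n. c k)"
    using s by (intro sum_subtractf_nat) auto
  then show "(\<lambda>k. s k - c k) \<in> patterns n m"
    using s c by (auto simp: patterns_def)
  then show "h (\<lambda>k. s k - c k + c k) = h s"
    using \<open>(\<lambda>k. s k - c k + c k) = s\<close> by simp
next
  fix t assume t: "t \<in> patterns n m"
  then show "(\<lambda>k. t k + c k - c k) = t"
    by simp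
  show "(\<lambda>k. t k + c k) \<in> {s. s \<in> patterns n (m + m') \<and> (\<forall>k<n. c k \<le> s k)}"
    using t c by (auto simp: patterns_def sum.distrib)
qed

lemma sum_valid_patterns_shift:
  assumes "I \<subseteq> {..<n}" and g: "g \<in> ({..<n} - I) \<rightarrow>\<^sub>E {..<n}"
  defines "c \<equiv> cnt ({..<n} - I) g"
  shows "(\<Sum>s | s \<in> patterns n n \<and> valid_pattern n s.
            if \<forall>k<n. c k \<le> s k then h (\<lambda>k. s k - c k) else 0) =
    (\<Sum>t\<in>patterns n (card I).
            if ((\<Sum>i<n. i * t i) + (\<Sum>j\<in>{..<n} - I. g j)) mod n = 0 then h t else (0::'a::comm_monoid_add))"
proof -
  define H where "H s = (if valid_pattern n s then h (\<lambda>k. s k - c k) else 0)" for s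
  have im: "g ` ({..<n} - I) \<subseteq> {..<n}"
    using g by auto
  have c: "c \<in> patterns n (card ({..<n} - I))"
    unfolding c_def using im by (intro cnt_in_patterns) auto
  have card: "card I + card ({..<n} - I) = n"
    using assms(1) card_mono[OF finite_lessThan assms(1)] by (simp add: card_Diff_subset finite_subset)
  have "valid_pattern n (\<lambda>k. t k + c k) \<longleftrightarrow> ((\<Sum>i<n. i * t i) + (\<Sum>j\<in>{..<n} - I. g j)) mod n = 0" for t
    using sum_mult_cnt[OF _ im] by (simp add: valid_pattern_def c_def distrib_left sum.distrib)
  then have "H (\<lambda>k. t k + c k) =
      (if ((\<Sum>i<n. i * t i) + (\<Sum>j\<in>{..<n} - I. g j)) mod n = 0 then h t else 0)" for t
    by (simp add: H_def)
  moreover have "(\<Sum>s | s \<in> patterns n n \<and> (\<forall>k<n. c k \<le> s k). H s) =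
      (\<Sum>t\<in>patterns n (card I). H (\<lambda>k. t k + c k))"
    using sum_patterns_shift[OF c, where m = "card I" and h = H] card by simp
  moreover have "(\<Sum>s | s \<in> patterns n n \<and> valid_pattern n s.
            if \<forall>k<n. c k \<le> s k then h (\<lambda>k. s k - c k) else 0) =
      (\<Sum>s | s \<in> patterns n n \<and> (\<forall>k<n. c k \<le> s k). H s)"
    by (simp add: H_def finite_patterns sum.inter_filter[symmetric] conj_commute)
  ultimately show ?thesis
    by simp
qed

lemma sum_valid_prob_pattern_eq:
  assumes "I \<subseteq> {..<n}"
  shows "(\<Sum>s | s \<in> patterns n n \<and> valid_pattern n s. prob_pattern n I s) =
    (1 / real n) ^ card ({..<n} - I) * (\<Sum>t\<in>patterns n (card I).
      real (card {g \<in> ({..<n} - I) \<rightarrow>\<^sub>E {..<n}.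
        ((\<Sum>i<n. i * t i) + (\<Sum>j\<in>{..<n} - I. g j)) mod n = 0}) * prob_ident n I t)"
proof -
  define G where "G = ({..<n} - I) \<rightarrow>\<^sub>E {..<n}"
  define cond where "cond t g \<longleftrightarrow> ((\<Sum>i<n. i * t i) + (\<Sum>j\<in>{..<n} - I. g j)) mod n = 0" for t g
  define shifted where "shifted g s = (if \<forall>k<n. cnt ({..<n} - I) g k \<le> s k
      then prob_ident n I (\<lambda>k. s k - cnt ({..<n} - I) g k) else 0)" for g s
  have finite: "finite G" "finite (patterns n (card I))"
    by (simp_all add: G_def finite_PiE finite_patterns)
  have "prob_pattern n I s = (1 / real n) ^ card ({..<n} - I) * (\<Sum>g\<in>G. shifted g s)" for s
    by (simp add: prob_pattern_def Let_def G_def shifted_def norm_fourier_squared sum_distrib_left)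
  then have "(\<Sum>s | s \<in> patterns n n \<and> valid_pattern n s. prob_pattern n I s) =
      (1 / real n) ^ card ({..<n} - I) * (\<Sum>g\<in>G. \<Sum>s | s \<in> patterns n n \<and> valid_pattern n s. shifted g s)"
    by (simp add: sum_distrib_left sum.swap[of _ G])
  also have "\<dots> = (1 / real n) ^ card ({..<n} - I) *
      (\<Sum>g\<in>G. \<Sum>t\<in>patterns n (card I). if cond t g then prob_ident n I t else 0)"
    using assms(1) by (simp add: G_def cond_def shifted_def sum_valid_patterns_shift)
  also have "\<dots> = (1 / real n) ^ card ({..<n} - I) *
      (\<Sum>t\<in>patterns n (card I). real (card {g \<in> G. cond t g}) * prob_ident n I t)"
    using finite by (subst sum.swap) (simp add: sum.inter_filter[symmetric])
  finally show ?thesis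
    by (simp add: G_def cond_def)
qed

theorem sum_valid_prob_pattern:
  assumes "I \<subseteq> {..<n}"
  shows "(\<Sum>s | s \<in> patterns n n \<and> valid_pattern n s. prob_pattern n I s) = (if I = {..<n} then 1 else 1 / real n)"
proof (cases "I = {..<n}")
  case True
  have "(\<Sum>s | s \<in> patterns n n \<and> valid_pattern n s. prob_pattern n I s) =
      (\<Sum>t\<in>patterns n n. (if (\<Sum>i<n. i * t i) mod n = 0 then 1 else 0) * prob_ident n {..<n} t)"
    using sum_valid_prob_pattern_eq[OF assms] True by (auto intro!: sum.cong)
  also have "\<dots> = (\<Sum>t\<in>patterns n n. prob_ident n {..<n} t)"
    by (intro sum.cong refl) (simp add: prob_ident_def amp_eq_0_if_not_valid valid_pattern_def)
  also have "\<dots> = 1"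
    using sum_prob_ident_eq_1[of "{..<n}" n] by simp
  finally show ?thesis
    using True by simp
next
  case False
  then obtain d where d: "d \<in> {..<n} - I"
    using assms by blast
  then have "0 < n"
    by simp
  have "(\<Sum>s | s \<in> patterns n n \<and> valid_pattern n s. prob_pattern n I s) =
      (1 / real n) ^ card ({..<n} - I) * (real n ^ (card ({..<n} - I) - 1) * (\<Sum>t\<in>patterns n (card I). prob_ident n I t))"
    using sum_valid_prob_pattern_eq[OF assms] card_PiE_sum_mod_eq_0[OF \<open>0 < n\<close> _ d]
    by (simp add: sum_distrib_left)
  also have "\<dots> = 1 / real n"
    using d \<open>0 < n\<close> sum_prob_ident_eq_1[OF assms]
    by (cases "card ({..<n} - I)") (auto simp: power_one_over field_simps)
  finally show ?thesis
    using False by simp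
qed

section \<open>Mixing over the set of identical photons\<close>

lemma sum_Pow_power_card:
  fixes p q :: "'a::comm_semiring_1"
  assumes "finite A"
  shows "(\<Sum>X\<in>Pow A. p ^ card X * q ^ (card A - card X)) = (p + q) ^ card A"
proof -
  have "(\<Sum>X\<in>Pow A. p ^ card X * q ^ (card A - card X)) = (\<Sum>X\<in>Pow A. (\<Prod>a\<in>X. p) * (\<Prod>a\<in>A - X. q))"
    using assms by (intro sum.cong refl) (auto simp: card_Diff_subset finite_subset)
  also have "\<dots> = (\<Prod>a\<in>A. p + q)"
    using assms by (rule prod_add[symmetric])
  finally show ?thesis
    by simp
qed

theorem corollary1:
  fixes n :: nat and eps :: real
  assumes "n \<ge> 1" and "0 \<le> eps" and "eps \<le> 1"
  shows "prob_valid_OBB n eps = (1 - 1 / real n) * (1 - eps) ^ n + 1 / real n"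
proof -
  define w where "w I = (1 - eps) ^ card I * eps ^ (n - card I)" for I :: "nat set"
  have "prob_valid_OBB n eps = (\<Sum>I\<in>Pow {..<n}. w I * (if I = {..<n} then 1 else 1 / real n))"
    unfolding prob_valid_OBB_def w_def by (intro sum.cong refl) (simp add: sum_valid_prob_pattern)
  also have "\<dots> = (\<Sum>I\<in>Pow {..<n}. w I / real n + (if I = {..<n} then w I * (1 - 1 / real n) else 0))"
    by (intro sum.cong refl) (auto simp: field_simps)
  also have "\<dots> = (\<Sum>I\<in>Pow {..<n}. w I) / real n + w {..<n} * (1 - 1 / real n)"
    by (simp add: sum.distrib sum_divide_distrib)
  also have "(\<Sum>I\<in>Pow {..<n}. w I) = 1"
    using sum_Pow_power_card[of "{..<n}" "1 - eps" eps] by (simp add: w_def)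
  finally show ?thesis
    by (simp add: w_def algebra_simps)
qed

end
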